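(* Let $p>1$ and let $t$ satisfy $g(p)\le t\le 2p/(p+1)$. Let $\eta(p,t)$ be the probability measure on $\mathbb{R}$ whose moment sequence is $(a_n(p,t))_{n\ge0}$. Then its $S$-transform is \[ S_{\eta(p,t)}(w)=(2+2w)^{1-p}\,\frac{\left(\sqrt{(2-t)^2+4(1-t)w}+t\right)^p}{\sqrt{(2-t)^2+4(1-t)w}+2-t}. \]
   Context: For real $p,r$, $\binom{np+r}{n}\frac{r}{np+r}$ denotes $1$ for $n=0$ and $\frac{r}{n!}\prod_{i=1}^{n-1}(np+r-i)$ for $n\ge1$. Set $a_n(p,t)=t\binom{np+1}{n}\frac{1}{np+1}+2(1-t)\binom{np+2}{n}\frac{1}{np+2}$; equivalently $\sum_{n\ge0}a_n(p,t)z^n=t\mathcal{B}_p(z)+(1-t)\mathcal{B}_p(z)^2$, where $\mathcal{B}_p(z)=\sum_{n\ge0}\binom{np+1}{n}\frac{z^n}{np+1}$ satisfies $\mathcal{B}_p(z)=1+z\mathcal{B}_p(z)^p$. For $p\ge1$, $g(p)=\min\{t\in\mathbb{R}: t\sin((1-1/p)\phi)+2(1-t)\sin\phi\cos(\phi/p)\ge0\ \forall\,0<\phi<\pi\}$; for $p>1$ and $g(p)\le t\le 2p/(p+1)$ the sequence $a_n(p,t)$ is the moment sequence of a unique probability measure $\eta(p,t)$, supported on $[0,p^p(p-1)^{1-p}]$. For a compactly supported probability measure $\mu$ with moment generating function $M_\mu(z)=\sum_{n\ge0}z^n\int x^n\,d\mu(x)$, the $S$-transform $S_\mu$ is defined (near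 $0$) by $M_\mu\!\left(\frac{z}{1+z}S_\mu(z)\right)=1+z$. Square roots are the branches equal to the positive root at $w=0$. *)

theory Defs
  imports "HOL-Probability.Probability"
begin

text \<open>Generalized binomial expression: binom(np+r, n) * r/(np+r), interpreted as
  1 for n = 0 and r/n! * prod_{i=1}^{n-1} (np + r - i) for n >= 1.\<close>
definition gbin :: "real \<Rightarrow> real \<Rightarrow> nat \<Rightarrow> real" where
  "gbin p r n = (if n = 0 then 1
      else r / fact n * (\<Prod>i\<in>{1..<n}. real n * p + r - real i))"

text \<open>a_n(p,t) = t binom(np+1,n)/(np+1) + 2(1-t) binom(np+2,n)/(np+2)
  = t * gbin p 1 n + (1-t) * gbin p 2 n.\<close>
definition a_seq :: "real \<Rightarrow> real \<Rightarrow> nat \<Rightarrow> real" where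
  "a_seq p t n = t * gbin p 1 n + 2 * (1 - t) * (gbin p 2 n / 2)"

definition g_fun :: "real \<Rightarrow> real" where
  "g_fun p = Inf {t. \<forall>\<phi>. 0 < \<phi> \<and> \<phi> < pi \<longrightarrow>
       t * sin ((1 - 1/p) * \<phi>) + 2 * (1 - t) * sin \<phi> * cos (\<phi> / p) \<ge> 0}"

definition moment_gf :: "real measure \<Rightarrow> complex \<Rightarrow> complex" where
  "moment_gf \<mu> z = (\<Sum>n. complex_of_real (\<integral>x. x ^ n \<partial>\<mu>) * z ^ n)"

text \<open>The claimed S-transform (principal branches; near w = 0 these agree with
  the branches positive at w = 0).\<close>
definition S_formula :: "real \<Rightarrow> real \<Rightarrow> complex \<Rightarrow> complex" where
  "S_formula p t w =
     (let R = csqrt (complex_of_real ((2 - t)^2) + 4 * complex_of_real (1 - t) * w)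
      in (2 + 2 * w) powr complex_of_real (1 - p) *
         ((R + complex_of_real t) powr complex_of_real p) / (R + complex_of_real (2 - t)))"

end

theory Submission
  imports Defs "HOL-Complex_Analysis.Complex_Analysis"
begin

(* Write B_p(z) = 1 + u. The functional equation B_p = 1 + z B_p^p says z = u (1+u)^(-p), so by
   Lagrange inversion the coefficients gbin p r are those of B_p^r = (1+u)^r; a factorial estimate
   shows these series converge near 0. Hence the moment series of eta(p,t) is t(1+u) + (1-t)(1+u)^2.
   The defining equation M(z) = 1 + w of the S-transform is then a quadratic in 1+u, whose root
   holomorphic at w = 0 is 1 + u = 2(1+w) / (sqrt((2-t)^2 + 4(1-t)w) + t); substituting it into
   z = u (1+u)^(-p) with z = w/(1+w) S(w) gives the stated formula. *)

unbundle no vec_syntax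
unbundle fps_syntax

lemma fps_deriv_power_X_div_mult_power:
  fixes \<Phi> :: "'a::field_char_0 fps"
  assumes "\<Phi> $ 0 = 1"
  shows "fps_deriv ((fps_X * inverse \<Phi>) ^ i) * \<Phi> ^ i
    = fps_const (of_nat i) * fps_X ^ (i - 1) - fps_const (of_nat i) * fps_X ^ i * (inverse \<Phi> * fps_deriv \<Phi>)"
proof -
  have inv: "inverse \<Phi> * \<Phi> = 1"
    using assms by (simp add: inverse_mult_eq_1)
  have "(fps_X * inverse \<Phi>) ^ i * \<Phi> ^ i = fps_X ^ i"
    by (simp add: power_mult_distrib mult.assoc flip: power_mult_distrib[of "inverse \<Phi>"] add: inv)
  then have "fps_deriv ((fps_X * inverse \<Phi>) ^ i * \<Phi> ^ i) = fps_deriv (fps_X ^ i)"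
    by simp
  then have "fps_deriv ((fps_X * inverse \<Phi>) ^ i) * \<Phi> ^ i + (fps_X * inverse \<Phi>) ^ i * fps_deriv (\<Phi> ^ i)
      = fps_const (of_nat i) * fps_X ^ (i - 1)"
    by (simp add: fps_deriv_power add.commute)
  moreover have "(fps_X * inverse \<Phi>) ^ i * fps_deriv (\<Phi> ^ i)
      = fps_const (of_nat i) * fps_X ^ i * (inverse \<Phi> * fps_deriv \<Phi>)"
  proof (cases i)
    case (Suc j)
    have "(inverse \<Phi>) ^ j * \<Phi> ^ j = 1"
      by (simp flip: power_mult_distrib add: inv)
    then show ?thesis
      unfolding Suc fps_deriv_power by (simp add: power_mult_distrib mult_ac)
  qed simp
  ultimately show ?thesis
    by (simp add: eq_diff_eq)
qed

lemma fps_deriv_mult_power_nth: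
  fixes \<Phi> :: "'a::field_char_0 fps"
  shows "(fps_deriv \<Phi> * \<Phi> ^ k) $ k = (\<Phi> ^ Suc k) $ Suc k"
proof -
  have "of_nat (Suc k) * (fps_deriv \<Phi> * \<Phi> ^ k) $ k = fps_deriv (\<Phi> ^ Suc k) $ k"
    by (simp only: fps_deriv_power diff_Suc_1 mult.assoc fps_mult_left_const_nth)
  also have "\<dots> = of_nat (Suc k) * (\<Phi> ^ Suc k) $ Suc k"
    by (simp only: fps_deriv_nth Suc_eq_plus1)
  finally show ?thesis
    by (metis mult_cancel_left of_nat_eq_0_iff Suc_neq_Zero)
qed

lemma lagrange_residue:
  fixes \<Phi> :: "'a::field_char_0 fps"
  assumes \<Phi>0: "\<Phi> $ 0 = 1" and "i \<le> m" and "0 < m"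
  shows "(fps_deriv ((fps_X * inverse \<Phi>) ^ i) * \<Phi> ^ m) $ (m - 1) = (if i = m then of_nat m else 0)"
proof (cases "i = 0")
  case False
  obtain k where m: "m = i + k"
    using \<open>i \<le> m\<close> le_Suc_ex by blast
  have "fps_deriv ((fps_X * inverse \<Phi>) ^ i) * \<Phi> ^ m
      = fps_const (of_nat i) * fps_X ^ (i - 1) * \<Phi> ^ k
        - fps_const (of_nat i) * fps_X ^ i * (inverse \<Phi> * fps_deriv \<Phi> * \<Phi> ^ k)"
    unfolding m power_add mult.assoc[symmetric] fps_deriv_power_X_div_mult_power[OF \<Phi>0]
    by (simp add: left_diff_distrib mult.assoc)
  moreover have "(fps_const (of_nat i) * fps_X ^ (i - 1) * \<Phi> ^ k) $ (m - 1) = of_nat i * (\<Phi> ^ k) $ k"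
    using False by (simp add: m fps_X_power_mult_nth mult.assoc)
  moreover have "(fps_const (of_nat i) * fps_X ^ i * (inverse \<Phi> * fps_deriv \<Phi> * \<Phi> ^ k)) $ (m - 1)
      = (if k = 0 then 0 else of_nat i * (\<Phi> ^ k) $ k)"
  proof (cases k)
    case (Suc l)
    have "inverse \<Phi> * fps_deriv \<Phi> * \<Phi> ^ k = fps_deriv \<Phi> * \<Phi> ^ l * (inverse \<Phi> * \<Phi>)"
      by (simp add: Suc mult_ac)
    also have "inverse \<Phi> * \<Phi> = 1"
      using \<Phi>0 by (simp add: inverse_mult_eq_1)
    finally have q: "inverse \<Phi> * fps_deriv \<Phi> * \<Phi> ^ k = fps_deriv \<Phi> * \<Phi> ^ l"
      by simp
    show ?thesis
      unfolding q using False by (simp add: Suc m fps_X_power_mult_nth mult.assoc fps_deriv_mult_power_nth del: power_Suc)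
  qed (use False in \<open>simp add: m fps_X_power_mult_nth mult.assoc\<close>)
  ultimately show ?thesis
    by (simp add: m)
qed (use assms in simp)

lemma fps_deriv_mult_nth_of_low_zero:
  fixes E \<Phi> :: "'a::field_char_0 fps"
  assumes "\<Phi> $ 0 = 1" and "\<And>j. j < N \<Longrightarrow> E $ j = 0" and "0 < N"
  shows "(fps_deriv E * \<Phi> ^ N) $ (N - 1) = of_nat N * E $ N"
proof -
  have "(fps_deriv E * \<Phi> ^ N) $ (N - 1) = (\<Sum>j=0..N-1. fps_deriv E $ j * (\<Phi> ^ N) $ (N - 1 - j))"
    by (rule fps_mult_nth)
  also have "\<dots> = (\<Sum>j\<in>{N-1}. fps_deriv E $ j * (\<Phi> ^ N) $ (N - 1 - j))"
    by (rule sum.mono_neutral_right) (use assms(2) in \<open>auto simp: fps_deriv_nth\<close>)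
  also have "\<dots> = of_nat N * E $ N"
    using assms by (simp add: fps_deriv_nth fps_power_zeroth_eq_one)
  finally show ?thesis .
qed

definition lagrange_coeff :: "'a::field_char_0 fps \<Rightarrow> 'a fps \<Rightarrow> nat \<Rightarrow> 'a" where
  "lagrange_coeff H \<Phi> n = (if n = 0 then H $ 0 else (fps_deriv H * \<Phi> ^ n) $ (n - 1) / of_nat n)"

lemma lagrange_inversion_nth:
  fixes H \<Phi> :: "'a::field_char_0 fps"
  assumes \<Phi>0: "\<Phi> $ 0 = 1"
  shows "H $ N = (\<Sum>i=0..N. lagrange_coeff H \<Phi> i * ((fps_X * inverse \<Phi>) ^ i) $ N)"
proof (induction N rule: less_induct)
  case (less N)
  define Z where "Z = fps_X * inverse \<Phi>"
  define c where "c = lagrange_coeff H \<Phi>"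
  define E where "E = H - (\<Sum>i=0..N. fps_const (c i) * Z ^ i)"
  have Z_low: "(Z ^ i) $ m = 0" if "m < i" for i m
    using that by (simp add: Z_def power_mult_distrib fps_X_power_mult_nth)
  have E_nth: "E $ m = H $ m - (\<Sum>i=0..N. c i * (Z ^ i) $ m)" for m
    by (simp add: E_def fps_sum_nth)
  have E_low: "E $ m = 0" if "m < N" for m
  proof -
    have "(\<Sum>i=0..N. c i * (Z ^ i) $ m) = (\<Sum>i=0..m. c i * (Z ^ i) $ m)"
      by (rule sum.mono_neutral_right) (use that Z_low in auto)
    then show ?thesis
      using less.IH[OF that] by (simp add: E_nth Z_def c_def)
  qed
  have "E $ N = 0"
  proof (cases "N = 0")
    case True
    then show ?thesis by (simp add: E_nth c_def lagrange_coeff_def)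
  next
    case False
    have "of_nat N * E $ N = (fps_deriv E * \<Phi> ^ N) $ (N - 1)"
      using fps_deriv_mult_nth_of_low_zero[OF \<Phi>0 E_low] False by simp
    also have "\<dots> = (fps_deriv H * \<Phi> ^ N) $ (N - 1)
        - (\<Sum>i=0..N. c i * (fps_deriv (Z ^ i) * \<Phi> ^ N) $ (N - 1))"
      by (simp add: E_def fps_deriv_sum left_diff_distrib sum_distrib_right mult.assoc fps_sum_nth)
    also have "(\<Sum>i=0..N. c i * (fps_deriv (Z ^ i) * \<Phi> ^ N) $ (N - 1))
        = (\<Sum>i=0..N. if i = N then c N * of_nat N else 0)"
      by (rule sum.cong) (use False lagrange_residue[OF \<Phi>0] in \<open>auto simp: Z_def\<close>)
    also have "\<dots> = (fps_deriv H * \<Phi> ^ N) $ (N - 1)"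
      using False by (simp add: c_def lagrange_coeff_def)
    finally show ?thesis
      using False by simp
  qed
  then show ?case
    by (simp add: E_nth Z_def c_def)
qed

lemma fps_compose_lagrange_inversion:
  fixes H \<Phi> :: "'a::field_char_0 fps"
  assumes "\<Phi> $ 0 = 1"
  shows "fps_compose (Abs_fps (lagrange_coeff H \<Phi>)) (fps_X * inverse \<Phi>) = H"
  by (rule fps_ext) (simp add: fps_compose_nth lagrange_inversion_nth[OF assms, symmetric])

lemma fps_deriv_fps_binomial: "fps_deriv (fps_binomial c) = fps_const c * fps_binomial (c - 1)"
  by (rule fps_ext) (simp add: fps_binomial_nth flip: gbinomial_absorption)

lemma inverse_fps_binomial: "inverse (fps_binomial c) = fps_binomial (- c)"
  by (rule fps_inverse_unique) (simp flip: fps_binomial_add_mult)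

lemma lagrange_coeff_fps_binomial:
  fixes p r :: "'a::field_char_0"
  shows "lagrange_coeff (fps_binomial r) (fps_binomial p) (Suc m)
    = r * ((r - 1 + of_nat (Suc m) * p) gchoose m) / of_nat (Suc m)"
proof -
  have "fps_deriv (fps_binomial r) * fps_binomial p ^ Suc m = fps_const r * fps_binomial (r - 1 + of_nat (Suc m) * p)"
    by (simp only: fps_deriv_fps_binomial fps_binomial_power fps_binomial_add_mult mult.assoc)
  then show ?thesis
    by (simp only: lagrange_coeff_def Suc_not_Zero if_False diff_Suc_1 fps_mult_left_const_nth fps_binomial_nth)
qed

lemma gbin_Suc: "gbin p r (Suc m) = r * ((r - 1 + real (Suc m) * p) gchoose m) / real (Suc m)"
proof -
  have "(\<Prod>i\<in>{1..<Suc m}. real (Suc m) * p + r - real i) = (\<Prod>i\<in>{0..<m}. real (Suc m) * p + r - real (Suc i))"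
    unfolding One_nat_def by (rule prod.shift_bounds_Suc_ivl)
  also have "\<dots> = (\<Prod>i\<in>{0..<m}. (r - 1 + real (Suc m) * p) - real i)"
    by (rule prod.cong) (auto simp: algebra_simps)
  finally show ?thesis
    by (simp add: gbin_def gbinomial_prod_rev del: of_nat_Suc)
qed

lemma lagrange_coeff_fps_binomial_of_real:
  "lagrange_coeff (fps_binomial (of_real r)) (fps_binomial (of_real p)) n = complex_of_real (gbin p r n)"
proof (cases n)
  case 0
  then show ?thesis by (simp add: lagrange_coeff_def gbin_def)
next
  case (Suc m)
  have "of_real (r - 1 + real (Suc m) * p) = (of_real r - 1 + of_nat (Suc m) * of_real p :: complex)"
    by simp
  then show ?thesis
    by (simp add: Suc gbin_Suc lagrange_coeff_fps_binomial gbinomial_prod_rev of_real_prod del: of_nat_Suc)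
qed

definition gbin_fps :: "real \<Rightarrow> real \<Rightarrow> complex fps" where
  "gbin_fps p r = Abs_fps (\<lambda>n. complex_of_real (gbin p r n))"

lemma fps_compose_gbin_fps:
  "fps_compose (gbin_fps p r) (fps_X * fps_binomial (- of_real p)) = fps_binomial (of_real r)"
  using fps_compose_lagrange_inversion[of "fps_binomial (of_real p)" "fps_binomial (of_real r)"]
  by (simp add: gbin_fps_def inverse_fps_binomial flip: lagrange_coeff_fps_binomial_of_real)

lemma prod_upper_half_le: "(\<Prod>i\<in>{1..n}. real (n + i)) \<le> 4 ^ n * fact n"
proof -
  have "(\<Prod>i\<in>{1..n}. real (n + i)) = (\<Prod>j\<in>{Suc n..2*n}. real j)"
    by (rule prod.reindex_bij_witness[where i="\<lambda>j. j - n" and j="\<lambda>i. n + i"]) auto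
  also have "\<dots> = real (\<Prod>{Suc n..2*n})"
    by simp
  also have "\<Prod>{Suc n..2*n} = fact n * (2*n choose n)"
    using fact_eq_fact_times[of n "2*n"] binomial_fact_lemma[of n "2*n"] by (simp add: mult_ac)
  also have "real (fact n * (2*n choose n)) \<le> fact n * 4 ^ n"
    using binomial_le_pow2[of "2*n" n] by (simp add: power_mult mult_left_mono flip: of_nat_le_iff)
  finally show ?thesis
    by (simp add: mult.commute)
qed

lemma abs_gbin_le:
  assumes "p \<ge> 0"
  shows "\<bar>gbin p r n\<bar> \<le> (1 + \<bar>r\<bar>) * (4 * (p + \<bar>r\<bar> + 1)) ^ n"
proof (cases "n = 0")
  case False
  define L where "L = p + \<bar>r\<bar> + 1"
  have L: "L \<ge> 1"
    using assms by (simp add: L_def)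
  have factor_le: "\<bar>real n * p + r - real i\<bar> \<le> L * real (n + i)" for i
  proof -
    have "0 \<le> real n * p" "0 \<le> p * real i" "0 \<le> \<bar>r\<bar> * real i" "\<bar>r\<bar> \<le> \<bar>r\<bar> * real n"
      using assms False by (simp_all add: mult_le_cancel_left1)
    moreover have "L * real (n + i) = real n * p + p * real i + \<bar>r\<bar> * real n + \<bar>r\<bar> * real i + real n + real i"
      by (simp add: L_def algebra_simps)
    ultimately show ?thesis
      unfolding abs_le_iff using abs_ge_self[of r] abs_ge_minus_self[of r] by linarith
  qed
  have "\<bar>\<Prod>i\<in>{1..<n}. real n * p + r - real i\<bar> \<le> (\<Prod>i\<in>{1..<n}. L * real (n + i))"
    unfolding abs_prod by (intro prod_mono conjI abs_ge_zero factor_le)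
  also have "\<dots> \<le> (\<Prod>i\<in>{1..n}. L * real (n + i))"
  proof (rule prod_mono2)
    show "1 \<le> L * real (n + i)" if "i \<in> {1..n} - {1..<n}" for i
    proof -
      have ni: "1 \<le> real (n + i)"
        using that by simp
      show ?thesis
        using mult_mono[OF L ni] L by simp
    qed
  qed (use L in auto)
  also have "\<dots> \<le> L ^ n * (4 ^ n * fact n)"
    using prod_upper_half_le[of n] L by (simp add: prod.distrib mult_left_mono)
  finally have prod_le: "\<bar>\<Prod>i\<in>{1..<n}. real n * p + r - real i\<bar> \<le> L ^ n * (4 ^ n * fact n)" .
  have "\<bar>gbin p r n\<bar> = \<bar>r\<bar> / fact n * \<bar>\<Prod>i\<in>{1..<n}. real n * p + r - real i\<bar>"
    using False by (simp add: gbin_def abs_mult)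
  also have "\<dots> \<le> \<bar>r\<bar> / fact n * (L ^ n * (4 ^ n * fact n))"
    by (intro mult_left_mono prod_le) simp
  also have "\<dots> \<le> (1 + \<bar>r\<bar>) * (4 * L) ^ n"
    using L by (simp add: power_mult_distrib mult_right_mono)
  finally show ?thesis
    by (simp add: L_def)
qed (simp add: gbin_def)

lemma conv_radius_pos_of_geometric_bound:
  fixes f :: "nat \<Rightarrow> 'a::{banach, real_normed_div_algebra}"
  assumes K: "K > 0" and bound: "\<And>n. norm (f n) \<le> C * K ^ n"
  shows "conv_radius f > 0"
proof -
  define z :: 'a where "z = of_real (1 / (2 * K))"
  have norm_z: "norm z = 1 / (2 * K)"
    unfolding z_def norm_of_real using K by simp
  have "summable (\<lambda>n. f n * z ^ n)"
  proof (rule summable_comparison_test)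
    have "norm (f n * z ^ n) \<le> C * (1/2) ^ n" for n
    proof -
      have "norm (f n * z ^ n) \<le> C * K ^ n * (1 / (2 * K)) ^ n"
        unfolding norm_mult norm_power norm_z using K bound[of n] by (simp add: mult_right_mono)
      also have "\<dots> = C * (1/2) ^ n"
        using K by (simp add: power_divide)
      finally show ?thesis .
    qed
    then show "\<exists>N. \<forall>n\<ge>N. norm (f n * z ^ n) \<le> C * (1/2) ^ n"
      by blast
    show "summable (\<lambda>n. C * (1/2::real) ^ n)"
      by (intro summable_mult summable_geometric) simp
  qed
  then have "ereal (norm z) \<le> conv_radius f"
    by (rule conv_radius_geI)
  moreover have "norm z > 0"
    using K by (simp add: norm_z)
  ultimately show ?thesis
    by (meson ereal_less(2) less_le_trans zero_ereal_def)
qed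

lemma fps_conv_radius_gbin_fps_pos:
  assumes "p \<ge> 0"
  shows "fps_conv_radius (gbin_fps p r) > 0"
  unfolding fps_conv_radius_def gbin_fps_def
  using abs_gbin_le[OF assms] assms
  by (intro conv_radius_pos_of_geometric_bound[where K="4 * (p + \<bar>r\<bar> + 1)" and C="1 + \<bar>r\<bar>"]) auto

lemma eventually_sums_eval_fps:
  fixes F :: "'a::{banach, real_normed_div_algebra} fps"
  assumes "fps_conv_radius F > 0"
  shows "eventually (\<lambda>z. (\<lambda>n. F $ n * z ^ n) sums eval_fps F z) (nhds 0)"
proof -
  have "eventually (\<lambda>z. z \<in> eball 0 (fps_conv_radius F)) (nhds 0)"
    using assms by (intro eventually_nhds_in_open) (auto simp: zero_ereal_def)
  then show ?thesis
    by eventually_elim (simp add: sums_eval_fps)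
qed

lemma has_fps_expansion_eventually_eq:
  assumes "f has_fps_expansion F" and "g has_fps_expansion F"
  shows "eventually (\<lambda>z. f z = g z) (nhds 0)"
  using assms unfolding has_fps_expansion_def by (auto elim: eventually_elim2)

definition fuss_catalan_inverse :: "real \<Rightarrow> complex \<Rightarrow> complex" where
  "fuss_catalan_inverse p u = u * (1 + u) powr (- complex_of_real p)"

lemma has_fps_expansion_fuss_catalan_inverse:
  "fuss_catalan_inverse p has_fps_expansion fps_X * fps_binomial (- of_real p)"
  unfolding fuss_catalan_inverse_def[abs_def]
  by (intro has_fps_expansion_mult has_fps_expansion_fps_X has_fps_expansion_binomial_complex)

lemma tendsto_fuss_catalan_inverse: "filterlim (fuss_catalan_inverse p) (nhds 0) (nhds 0)"
proof -
  have "isCont (fuss_catalan_inverse p) 0"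
    using has_fps_expansion_imp_continuous[OF has_fps_expansion_fuss_catalan_inverse[of p]] by simp
  moreover have "fuss_catalan_inverse p 0 = 0"
    by (simp add: fuss_catalan_inverse_def)
  ultimately show ?thesis
    using isCont_tendsto_compose[OF _ filterlim_ident[of "nhds 0"]] by metis
qed

lemma eval_gbin_fps_fuss_catalan_inverse:
  assumes "p \<ge> 0"
  shows "eventually (\<lambda>u. eval_fps (gbin_fps p r) (fuss_catalan_inverse p u) = (1 + u) powr of_real r) (nhds 0)"
proof -
  have "(eval_fps (gbin_fps p r) \<circ> fuss_catalan_inverse p) has_fps_expansion fps_binomial (of_real r)"
    using has_fps_expansion_compose[OF eval_fps_has_fps_expansion[OF fps_conv_radius_gbin_fps_pos[OF assms]]
        has_fps_expansion_fuss_catalan_inverse[of p]]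
    by (simp add: fps_compose_gbin_fps)
  from has_fps_expansion_eventually_eq[OF this has_fps_expansion_binomial_complex]
  show ?thesis
    by simp
qed

lemma a_seq_eq: "a_seq p t n = t * gbin p 1 n + (1 - t) * gbin p 2 n"
  by (simp add: a_seq_def)

lemma eventually_a_seq_sums:
  assumes "p \<ge> 0"
  shows "eventually (\<lambda>u. (\<lambda>n. complex_of_real (a_seq p t n) * fuss_catalan_inverse p u ^ n) sums
    (of_real t * (1 + u) + of_real (1 - t) * (1 + u) ^ 2)) (nhds 0)"
proof -
  have "eventually (\<lambda>u. (\<lambda>n. gbin_fps p r $ n * fuss_catalan_inverse p u ^ n) sums (1 + u) powr of_real r) (nhds 0)" for r
    using eventually_compose_filterlim[OF eventually_sums_eval_fps[OF fps_conv_radius_gbin_fps_pos[OF assms, of r]]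
        tendsto_fuss_catalan_inverse[of p]] eval_gbin_fps_fuss_catalan_inverse[OF assms, of r]
    by eventually_elim simp
  from this[of 1] this[of 2] show ?thesis
  proof eventually_elim
    case (elim u)
    then have "(\<lambda>n. of_real t * (gbin_fps p 1 $ n * fuss_catalan_inverse p u ^ n)
        + of_real (1 - t) * (gbin_fps p 2 $ n * fuss_catalan_inverse p u ^ n))
        sums (of_real t * (1 + u) + of_real (1 - t) * (1 + u) ^ 2)"
      by (intro sums_add sums_mult) simp_all
    then show ?case
      by (simp add: gbin_fps_def a_seq_eq algebra_simps)
  qed
qed

lemma Re_pos_imp_nonzero: "0 < Re z \<Longrightarrow> z \<noteq> 0"
  by auto

(* Re > 0 keeps both arguments in (-pi/2, pi/2), so Ln a - Ln b is again a principal logarithm. *)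
lemma powr_divide_Re_pos:
  fixes a b c :: complex
  assumes a: "Re a > 0" and b: "Re b > 0"
  shows "(a / b) powr c = a powr c / b powr c"
proof -
  have "Ln (exp (Ln a - Ln b)) = Ln a - Ln b"
    using Re_Ln_pos_lt_imp[OF a] Re_Ln_pos_lt_imp[OF b]
    by (intro Ln_exp) (auto simp: abs_less_iff)
  moreover have "a \<noteq> 0" "b \<noteq> 0"
    using a b by (simp_all add: Re_pos_imp_nonzero)
  ultimately have "Ln (a / b) = Ln a - Ln b"
    by (simp add: exp_diff)
  with \<open>a \<noteq> 0\<close> \<open>b \<noteq> 0\<close> show ?thesis
    by (simp add: powr_def exp_diff right_diff_distrib)
qed

lemma quadratic_root_diff_eq:
  fixes T w R :: "'a::field"
  assumes R2: "R ^ 2 = (2 - T) ^ 2 + 4 * (1 - T) * w" and "R + T \<noteq> 0" and "R + (2 - T) \<noteq> 0"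
  shows "2 * (1 + w) / (R + T) - 1 = 2 * w / (R + (2 - T))"
proof -
  have "(2 * (1 + w) - (R + T)) * (R + (2 - T)) = 2 * w * (R + T)"
    using R2 by (simp add: power2_eq_square algebra_simps)
  with assms show ?thesis
    by (simp add: field_simps)
qed

lemma quadratic_root_solves:
  fixes T w R :: "'a::field"
  assumes R2: "R ^ 2 = (2 - T) ^ 2 + 4 * (1 - T) * w" and "R + T \<noteq> 0"
  shows "T * (2 * (1 + w) / (R + T)) + (1 - T) * (2 * (1 + w) / (R + T)) ^ 2 = 1 + w"
proof -
  define B where "B = 2 * (1 + w) / (R + T)"
  have B: "B * (R + T) = 2 * (1 + w)"
    using assms(2) by (simp add: B_def)
  have "(T * B + (1 - T) * B ^ 2) * (R + T) ^ 2 = T * (B * (R + T)) * (R + T) + (1 - T) * (B * (R + T)) ^ 2"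
    by (simp add: algebra_simps power2_eq_square)
  also have "\<dots> = (1 + w) * (T * 2 * (R + T) + 4 * (1 - T) * (1 + w))"
    unfolding B by (simp add: algebra_simps power2_eq_square)
  also have "T * 2 * (R + T) + 4 * (1 - T) * (1 + w) = (R + T) ^ 2"
    using R2 by (simp add: power2_eq_square algebra_simps)
  finally show ?thesis
    using assms(2) by (simp add: B_def)
qed

lemma S_formula_eq_fuss_catalan_inverse:
  fixes p t :: real and w :: complex
  defines "R \<equiv> csqrt (of_real ((2 - t)^2) + 4 * of_real (1 - t) * w)"
  assumes pos: "Re (R + of_real t) > 0" "Re (R + of_real (2 - t)) > 0" "Re (1 + w) > 0"
  shows "w / (1 + w) * S_formula p t w = fuss_catalan_inverse p (2 * (1 + w) / (R + of_real t) - 1)"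
proof -
  define T where "T = complex_of_real t"
  define P where "P = complex_of_real p"
  have R2: "R ^ 2 = (2 - T) ^ 2 + 4 * (1 - T) * w"
    by (simp add: R_def T_def)
  have nz: "R + T \<noteq> 0" "R + (2 - T) \<noteq> 0" "1 + w \<noteq> 0"
    using pos[THEN Re_pos_imp_nonzero] by (simp_all add: T_def)
  have "fuss_catalan_inverse p (2 * (1 + w) / (R + T) - 1)
      = (2 * (1 + w) / (R + T) - 1) * ((2 + 2 * w) / (R + T)) powr (- P)"
    by (simp add: fuss_catalan_inverse_def P_def)
  also have "\<dots> = 2 * w / (R + (2 - T)) * ((2 + 2 * w) powr (- P) / (R + T) powr (- P))"
    unfolding quadratic_root_diff_eq[OF R2 nz(1,2)] using pos by (simp add: powr_divide_Re_pos T_def)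
  also have "\<dots> = w / (1 + w) * ((2 + 2 * w) powr (1 - P) * (R + T) powr P / (R + (2 - T)))"
  proof -
    define A where "A = (2 + 2 * w) powr (- P)"
    define Q where "Q = (R + T) powr (- P)"
    have e1: "(2 + 2 * w) powr (1 - P) = (2 + 2 * w) * A"
      using powr_add[of "2 + 2 * w" 1 "- P"] by (simp add: A_def)
    have e2: "(R + T) powr P = inverse Q"
      using powr_minus[of "R + T" "- P"] by (simp add: Q_def)
    have "w / (1 + w) * (2 + 2 * w) = 2 * w"
      using nz(3) by (simp add: field_simps)
    then show ?thesis
      unfolding e1 e2 A_def[symmetric] Q_def[symmetric] by (simp add: divide_inverse mult_ac) blast
  qed
  finally show ?thesis
    by (simp add: S_formula_def Let_def R_def T_def P_def)
qed

lemma eventually_Re_pos: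
  fixes f :: "complex \<Rightarrow> complex"
  assumes "isCont f a" and "Re (f a) > 0"
  shows "eventually (\<lambda>w. Re (f w) > 0) (nhds a)"
proof -
  have "((\<lambda>w. Re (f w)) \<longlongrightarrow> Re (f a)) (nhds a)"
    using isCont_tendsto_compose[OF assms(1) filterlim_ident] by (intro tendsto_intros)
  then show ?thesis
    using assms(2) by (rule order_tendstoD(1))
qed

lemma eventually_S_formula_sums:
  fixes p t :: real
  assumes "p \<ge> 0" and "t < 2"
  shows "eventually (\<lambda>w. (\<lambda>n. complex_of_real (a_seq p t n) * (w / (1 + w) * S_formula p t w) ^ n) sums (1 + w)) (nhds 0)"
proof -
  define R where "R w = csqrt (of_real ((2 - t)^2) + 4 * of_real (1 - t) * w)" for w
  define U where "U w = 2 * (1 + w) / (R w + of_real t) - 1" for w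
  have R0: "R 0 = of_real (2 - t)"
    using assms(2) by (simp add: R_def csqrt_of_real)
  have "isCont (\<lambda>w. of_real ((2 - t)^2) + 4 * of_real (1 - t) * w :: complex) 0"
    by (intro continuous_intros)
  moreover have "isCont csqrt ((\<lambda>w. of_real ((2 - t)^2) + 4 * of_real (1 - t) * w) 0)"
    using assms(2) by (intro continuous_at_csqrt) (simp add: complex_nonpos_Reals_iff)
  ultimately have "isCont R 0"
    unfolding R_def by (rule isCont_o2)
  then have cont: "isCont (\<lambda>w. R w + of_real c) 0" for c
    by (intro continuous_intros)
  have "filterlim U (nhds (U 0)) (nhds 0)"
    unfolding U_def using \<open>isCont R 0\<close> R0
    by (intro tendsto_intros isCont_tendsto_compose[OF \<open>isCont R 0\<close>] filterlim_ident) simp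
  moreover have "U 0 = 0"
    by (simp add: U_def R0)
  ultimately have U: "filterlim U (nhds 0) (nhds 0)"
    by simp
  have "eventually (\<lambda>w. Re (R w + of_real t) > 0) (nhds 0)"
    using eventually_Re_pos[OF cont] by (simp add: R0)
  moreover have "eventually (\<lambda>w. Re (R w + of_real (2 - t)) > 0) (nhds 0)"
    using eventually_Re_pos[OF cont] assms(2) by (simp add: R0)
  moreover have "eventually (\<lambda>w::complex. Re (1 + w) > 0) (nhds 0)"
    by (rule eventually_Re_pos) (intro continuous_intros, simp)
  moreover have "eventually (\<lambda>w. (\<lambda>n. complex_of_real (a_seq p t n) * fuss_catalan_inverse p (U w) ^ n) sums
      (of_real t * (1 + U w) + of_real (1 - t) * (1 + U w) ^ 2)) (nhds 0)"
    by (rule eventually_compose_filterlim[OF eventually_a_seq_sums[OF assms(1)] U])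
  ultimately show ?thesis
  proof eventually_elim
    case (elim w)
    have "(R w) ^ 2 = (2 - of_real t) ^ 2 + 4 * (1 - of_real t) * w"
      by (simp add: R_def)
    then have "of_real t * (1 + U w) + of_real (1 - t) * (1 + U w) ^ 2 = 1 + w"
      using quadratic_root_solves[of "R w" "of_real t" w] Re_pos_imp_nonzero[OF elim(1)] by (simp add: U_def)
    with elim show ?case
      using S_formula_eq_fuss_catalan_inverse[of t w p] by (simp add: R_def U_def)
  qed
qed

theorem mainTheorem4:
  fixes p t :: real and \<eta> :: "real measure"
  assumes "p > 1"
    and "g_fun p \<le> t" and "t \<le> 2 * p / (p + 1)"
    and "prob_space \<eta>" and "sets \<eta> = sets borel"
    and "\<And>n. integrable \<eta> (\<lambda>x. x ^ n)"
    and "\<And>n. (\<integral>x. x ^ n \<partial>\<eta>) = a_seq p t n"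
  shows "\<exists>r > 0. \<forall>w \<in> ball 0 r.
           summable (\<lambda>n. complex_of_real (\<integral>x. x ^ n \<partial>\<eta>) * (w / (1 + w) * S_formula p t w) ^ n) \<and>
           moment_gf \<eta> (w / (1 + w) * S_formula p t w) = 1 + w"
proof -
  have "2 * p / (p + 1) < 2"
    using assms(1) by (simp add: field_simps)
  then have "t < 2"
    using assms(3) by linarith
  then obtain r where "r > 0" and sums:
    "\<And>w. w \<in> ball 0 r \<Longrightarrow>
      (\<lambda>n. complex_of_real (a_seq p t n) * (w / (1 + w) * S_formula p t w) ^ n) sums (1 + w)"
    using eventually_S_formula_sums[of p t] assms(1)
    unfolding eventually_nhds_metric by (auto simp: dist_commute)
  then show ?thesis
    unfolding moment_gf_def assms(7) using sums_summable sums_unique by metis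
qed

end
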